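(* In the setting described in the context, there is a bound $\theta_{\max}$ which is $O(N^2)$ as a function of the number of channels $N$ such that, at every step $l$ of the projected subgradient updating performed within the DCDM algorithm, $\|\theta(\lambda^{(l)})\|_2\le\theta_{\max}$.
   Context: Setting: a source communicates with $K$ users through a single relay over $N$ channels. Given data: user weights $w_1,\dots,w_K\ge0$ with $\sum_kw_k=1$; nonnegative channel power gains $a_m$, $b_{nk}$, $c_{mk}$ ($1\le m,n\le N$, $1\le k\le K$); power limits $P_s,P_r,P_t>0$. Logarithms are base 2; $R_{mnk}(p^s,p^r)=\tfrac12\min\{\log(1+a_mp^s),\log(1+c_{mk}p^s+b_{nk}p^r)\}$. For $\lambda=(\lambda_s,\lambda_r,\lambda_t)\succeq0$ the dual function of the relaxed problem is $g(\lambda)=\max[\sum_{m,n,k}\frac{w_k}{2}\tilde\phi_{mnk}\min\{\log(1+a_mP^s_{mnk}/\tilde\phi_{mnk}),\log(1+c_{mk}P^s_{mnk}/\tilde\phi_{mnk}+b_{nk}P^r_{mnk}/\tilde\phi_{mnk})\}-(\lambda_s+\lambda_t)\sum P^s_{mnk}-(\lambda_r+\lambda_t)\sum P^r_{mnk}]+\lambda_sP_s+\lambda_rP_r+\lambda_tP_t$, the max over $\tilde\phi_{mnk}\in[0,1]$ with $\sum_{n,k}\tilde\phi_{mnk}=1\ \forall m$, $\sum_{m,k}\tilde\phi_{mnk}=1\ \forall n$ and $P^s,P^r\ge0$. Per-$\lambda$ procedure: $\alpha=2\ln2$, $[x]^+=\max\{x,0\}$, $p_2=([\frac{w_k}{\alpha(\lambda_s+\lambda_t)}-\frac1{c_{mk}}]^+,0)$,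 (for $b_{nk}>0$) $p_1=(1,\frac{a_m-c_{mk}}{b_{nk}})[\frac{w_kb_{nk}}{\alpha(b_{nk}(\lambda_s+\lambda_t)+(a_m-c_{mk})(\lambda_r+\lambda_t))}-\frac1{a_m}]^+$; $L_{mnk}(p^s,p^r,\lambda)=w_kR_{mnk}(p^s,p^r)-(\lambda_s+\lambda_t)p^s-(\lambda_r+\lambda_t)p^r$; $(p^s_{mnk}(\lambda),p^r_{mnk}(\lambda))$ equals $([\frac{w_k}{\alpha(\lambda_s+\lambda_t)}-\frac1{a_m}]^+,0)$ if $a_m\le c_{mk}$, $p_1$ if $a_m>c_{mk}$ and $\frac{c_{mk}}{\lambda_s+\lambda_t}<\frac{b_{nk}}{\lambda_r+\lambda_t}$, otherwise whichever of $p_1,p_2$ gives larger $L_{mnk}$. $A_{mnk}(\lambda)=L_{mnk}(p^s_{mnk}(\lambda),p^r_{mnk}(\lambda),\lambda)$; $k^*(m,n)\in\arg\max_kA_{mnk}(\lambda)$; $X^*$ an $N\times N$ permutation matrix maximizing $\sum x_{mn}A_{mnk^*(m,n)}(\lambda)$; $\phi^*_{mnk}(\lambda)=x^*_{mn}\mathbf 1[k=k^*(m,n)]$, $P^{s*}_{mnk}(\lambda)=\phi^*_{mnk}(\lambda)p^s_{mnk}(\lambda)$, $P^{r*}_{mnk}(\lambda)=\phi^*_{mnk}(\lambda)p^r_{mnk}(\lambda)$. Subgradient: $\theta(\lambda)=(P_s,P_r,P_t)-\sum_{m,n,k}(P^{s*}_{mnk}(\lambda),P^{r*}_{mnk}(\lambda),P^{s*}_{mnk}(\lambda)+P^{r*}_{mnk}(\lambda))$.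 Regions: $\mathcal R_1=\{\lambda\succeq0:\lambda_s+\lambda_t\ge\frac{\min_{\{k:w_k>0\}}w_k\min\{\min_{\{m:a_m>0\}}a_m,\min_{\{m,k:c_{mk}>0\}}c_{mk}\}}{4\alpha(\max_ma_m\min\{P_s,P_t\}+1)}\}$, $\mathcal R_2=\{\lambda\succeq0:\lambda_s+\lambda_t+\frac{\min_{\{m:a_m>0\}}a_m}{\max_{n,k}b_{nk}}(\lambda_r+\lambda_t)\ge\frac{\min_{\{k:w_k>0\}}w_k}{\alpha(\min\{P_s,P_t\}+1/\min_{\{m:a_m>0\}}a_m)}\}$. Projected subgradient updating onto a convex region $\mathcal R$: start from $\lambda^{(0)}\in\mathcal R$ and iterate $\lambda^{(l+1)}=\Pi_{\mathcal R}(\lambda^{(l)}-\nu^{(l)}\theta(\lambda^{(l)}))$, $\Pi_{\mathcal R}$ the Euclidean projection, $\nu^{(l)}>0$. DCDM algorithm: if some $c_{mk}>0$: run projected subgradient updating onto $\mathcal R_1$ (output $\lambda_1^*$); then set all $c_{mk}=0$ and run projected subgradient updating onto $\mathcal R_2$ with these modified gains (output $\lambda_2^*$); return $\arg\min_{\lambda\in\{\lambda_1^*,\lambda_2^*\}}g(\lambda)$. Otherwise, run projected subgradient updating onto $\mathcal R_2$ and return its output. *)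

theory Defs
  imports "HOL-Analysis.Analysis" "HOL-Library.Landau_Symbols" "HOL-Combinatorics.Permutations"
begin

(* Dual variables lambda = (lambda_s, lambda_r, lambda_t) as points of real x real x real,
   whose product metric is the Euclidean one on R^3. *)
type_synonym dual = "real \<times> real \<times> real"

definition lam_s :: "dual \<Rightarrow> real" where "lam_s l = fst l"
definition lam_r :: "dual \<Rightarrow> real" where "lam_r l = fst (snd l)"
definition lam_t :: "dual \<Rightarrow> real" where "lam_t l = snd (snd l)"

definition alpha :: real where "alpha = 2 * ln 2"

definition pplus :: "real \<Rightarrow> real" where "pplus x = max x 0"

(* water-filling level [x - 1/g]^+ ; for g = 0 the convention 1/0 = +infinity gives 0 *)
definition wlevel :: "real \<Rightarrow> real \<Rightarrow> real" where
  "wlevel x g = (if g > 0 then pplus (x - 1 / g) else 0)"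

(* channels m,n in {..<N}, users k in {..<K};  a m, b n k, c m k *)
definition rate :: "(nat \<Rightarrow> real) \<Rightarrow> (nat \<Rightarrow> nat \<Rightarrow> real) \<Rightarrow> (nat \<Rightarrow> nat \<Rightarrow> real)
    \<Rightarrow> nat \<Rightarrow> nat \<Rightarrow> nat \<Rightarrow> real \<times> real \<Rightarrow> real" where
  "rate a b c m n k p = 1/2 * min (log 2 (1 + a m * fst p))
                                   (log 2 (1 + c m k * fst p + b n k * snd p))"

definition Lag :: "(nat \<Rightarrow> real) \<Rightarrow> (nat \<Rightarrow> real) \<Rightarrow> (nat \<Rightarrow> nat \<Rightarrow> real) \<Rightarrow> (nat \<Rightarrow> nat \<Rightarrow> real)
    \<Rightarrow> nat \<Rightarrow> nat \<Rightarrow> nat \<Rightarrow> real \<times> real \<Rightarrow> dual \<Rightarrow> real" where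
  "Lag w a b c m n k p lam = w k * rate a b c m n k p
      - (lam_s lam + lam_t lam) * fst p - (lam_r lam + lam_t lam) * snd p"

definition p0 :: "(nat \<Rightarrow> real) \<Rightarrow> (nat \<Rightarrow> real) \<Rightarrow> nat \<Rightarrow> nat \<Rightarrow> dual \<Rightarrow> real \<times> real" where
  "p0 w a m k lam = (wlevel (w k / (alpha * (lam_s lam + lam_t lam))) (a m), 0)"

definition p2 :: "(nat \<Rightarrow> real) \<Rightarrow> (nat \<Rightarrow> nat \<Rightarrow> real) \<Rightarrow> nat \<Rightarrow> nat \<Rightarrow> dual \<Rightarrow> real \<times> real" where
  "p2 w c m k lam = (wlevel (w k / (alpha * (lam_s lam + lam_t lam))) (c m k), 0)"

definition p1 :: "(nat \<Rightarrow> real) \<Rightarrow> (nat \<Rightarrow> real) \<Rightarrow> (nat \<Rightarrow> nat \<Rightarrow> real) \<Rightarrow> (nat \<Rightarrow> nat \<Rightarrow> real)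
    \<Rightarrow> nat \<Rightarrow> nat \<Rightarrow> nat \<Rightarrow> dual \<Rightarrow> real \<times> real" where
  "p1 w a b c m n k lam =
     (let t = wlevel (w k * b n k / (alpha * (b n k * (lam_s lam + lam_t lam)
                      + (a m - c m k) * (lam_r lam + lam_t lam)))) (a m)
      in (t, (a m - c m k) / b n k * t))"

(* the condition c/(lam_s+lam_t) < b/(lam_r+lam_t), written cross-multiplied *)
definition p1_cond :: "(nat \<Rightarrow> nat \<Rightarrow> real) \<Rightarrow> (nat \<Rightarrow> nat \<Rightarrow> real) \<Rightarrow> nat \<Rightarrow> nat \<Rightarrow> nat \<Rightarrow> dual \<Rightarrow> bool" where
  "p1_cond b c m n k lam \<longleftrightarrow> c m k * (lam_r lam + lam_t lam) < b n k * (lam_s lam + lam_t lam)"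

(* admissible outputs (p^s_{mnk}(lambda), p^r_{mnk}(lambda)); ties in the comparison may be
   broken either way; p1 is only defined for b_{nk} > 0 *)
definition p_adm :: "(nat \<Rightarrow> real) \<Rightarrow> (nat \<Rightarrow> real) \<Rightarrow> (nat \<Rightarrow> nat \<Rightarrow> real) \<Rightarrow> (nat \<Rightarrow> nat \<Rightarrow> real)
    \<Rightarrow> nat \<Rightarrow> nat \<Rightarrow> nat \<Rightarrow> dual \<Rightarrow> real \<times> real \<Rightarrow> bool" where
  "p_adm w a b c m n k lam p \<longleftrightarrow>
     (if a m \<le> c m k then p = p0 w a m k lam
      else if b n k > 0 \<and> p1_cond b c m n k lam then p = p1 w a b c m n k lam
      else if b n k > 0 then
        (p = p1 w a b c m n k lam \<and> Lag w a b c m n k (p2 w c m k lam) lam \<le> Lag w a b c m n k (p1 w a b c m n k lam) lam)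
        \<or> (p = p2 w c m k lam \<and> Lag w a b c m n k (p1 w a b c m n k lam) lam \<le> Lag w a b c m n k (p2 w c m k lam) lam)
      else p = p2 w c m k lam)"

definition Aval :: "(nat \<Rightarrow> real) \<Rightarrow> (nat \<Rightarrow> real) \<Rightarrow> (nat \<Rightarrow> nat \<Rightarrow> real) \<Rightarrow> (nat \<Rightarrow> nat \<Rightarrow> real)
    \<Rightarrow> nat \<Rightarrow> nat \<Rightarrow> nat \<Rightarrow> dual \<Rightarrow> real" where
  "Aval w a b c m n k lam =
     (if a m \<le> c m k then Lag w a b c m n k (p0 w a m k lam) lam
      else if b n k > 0 \<and> p1_cond b c m n k lam then Lag w a b c m n k (p1 w a b c m n k lam) lam
      else if b n k > 0 then max (Lag w a b c m n k (p1 w a b c m n k lam) lam)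
                                 (Lag w a b c m n k (p2 w c m k lam) lam)
      else Lag w a b c m n k (p2 w c m k lam) lam)"

(* th is a subgradient theta(lambda) produced by the per-lambda procedure for some admissible
   choice of the power pairs, of k*(m,n) and of the permutation X* (encoded by sigma:
   x*_{mn} = 1 iff n = sigma m) *)
definition subgrad_choice :: "nat \<Rightarrow> nat \<Rightarrow> (nat \<Rightarrow> real) \<Rightarrow> (nat \<Rightarrow> real) \<Rightarrow> (nat \<Rightarrow> nat \<Rightarrow> real)
    \<Rightarrow> (nat \<Rightarrow> nat \<Rightarrow> real) \<Rightarrow> real \<Rightarrow> real \<Rightarrow> real \<Rightarrow> dual \<Rightarrow> dual \<Rightarrow> bool" where
  "subgrad_choice N K w a b c Ps Pr Pt lam th \<longleftrightarrow>
     (\<exists>ks \<sigma> p.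
        (\<forall>m<N. \<forall>n<N. \<forall>k<K. p_adm w a b c m n k lam (p m n k)) \<and>
        (\<forall>m<N. \<forall>n<N. ks m n < K \<and> (\<forall>k<K. Aval w a b c m n k lam \<le> Aval w a b c m n (ks m n) lam)) \<and>
        \<sigma> permutes {..<N} \<and>
        (\<forall>\<tau>. \<tau> permutes {..<N} \<longrightarrow>
           (\<Sum>m<N. Aval w a b c m (\<tau> m) (ks m (\<tau> m)) lam)
             \<le> (\<Sum>m<N. Aval w a b c m (\<sigma> m) (ks m (\<sigma> m)) lam)) \<and>
        th = (Ps - (\<Sum>m<N. fst (p m (\<sigma> m) (ks m (\<sigma> m)))),
              Pr - (\<Sum>m<N. snd (p m (\<sigma> m) (ks m (\<sigma> m)))),
              Pt - (\<Sum>m<N. fst (p m (\<sigma> m) (ks m (\<sigma> m))) + snd (p m (\<sigma> m) (ks m (\<sigma> m))))))"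

definition nonneg_dual :: "dual \<Rightarrow> bool" where
  "nonneg_dual lam \<longleftrightarrow> lam_s lam \<ge> 0 \<and> lam_r lam \<ge> 0 \<and> lam_t lam \<ge> 0"

definition wmin :: "nat \<Rightarrow> (nat \<Rightarrow> real) \<Rightarrow> real" where
  "wmin K w = Min {w k |k. k < K \<and> w k > 0}"

definition region1 :: "nat \<Rightarrow> nat \<Rightarrow> (nat \<Rightarrow> real) \<Rightarrow> (nat \<Rightarrow> real) \<Rightarrow> (nat \<Rightarrow> nat \<Rightarrow> real)
    \<Rightarrow> real \<Rightarrow> real \<Rightarrow> dual set" where
  "region1 N K w a c Ps Pt = {lam. nonneg_dual lam \<and>
     lam_s lam + lam_t lam \<ge>
       wmin K w * min (Min {a m |m. m < N \<and> a m > 0}) (Min {c m k |m k. m < N \<and> k < K \<and> c m k > 0})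
       / (4 * alpha * (Max {a m |m. m < N} * min Ps Pt + 1))}"

definition region2 :: "nat \<Rightarrow> nat \<Rightarrow> (nat \<Rightarrow> real) \<Rightarrow> (nat \<Rightarrow> real) \<Rightarrow> (nat \<Rightarrow> nat \<Rightarrow> real)
    \<Rightarrow> real \<Rightarrow> real \<Rightarrow> dual set" where
  "region2 N K w a b Ps Pt = {lam. nonneg_dual lam \<and>
     lam_s lam + lam_t lam
       + Min {a m |m. m < N \<and> a m > 0} / Max {b n k |n k. n < N \<and> k < K} * (lam_r lam + lam_t lam)
     \<ge> wmin K w / (alpha * (min Ps Pt + 1 / Min {a m |m. m < N \<and> a m > 0}))}"

definition psg_run :: "dual set \<Rightarrow> (dual \<Rightarrow> dual \<Rightarrow> bool) \<Rightarrow> (nat \<Rightarrow> dual) \<Rightarrow> (nat \<Rightarrow> real)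
    \<Rightarrow> (nat \<Rightarrow> dual) \<Rightarrow> bool" where
  "psg_run Reg sg lam nu th \<longleftrightarrow> lam 0 \<in> Reg \<and>
     (\<forall>l. nu l > 0 \<and> sg (lam l) (th l) \<and>
          lam (Suc l) = closest_point Reg (lam l - nu l *\<^sub>R th l))"

definition dcdm_step_subgradient :: "nat \<Rightarrow> nat \<Rightarrow> (nat \<Rightarrow> real) \<Rightarrow> (nat \<Rightarrow> real) \<Rightarrow> (nat \<Rightarrow> nat \<Rightarrow> real)
    \<Rightarrow> (nat \<Rightarrow> nat \<Rightarrow> real) \<Rightarrow> real \<Rightarrow> real \<Rightarrow> real \<Rightarrow> dual \<Rightarrow> bool" where
  "dcdm_step_subgradient N K w a b c Ps Pr Pt g \<longleftrightarrow>
     (if \<exists>m<N. \<exists>k<K. c m k > 0 then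
        (\<exists>lam nu th l. psg_run (region1 N K w a c Ps Pt) (subgrad_choice N K w a b c Ps Pr Pt) lam nu th
                        \<and> g = th l)
        \<or> (\<exists>lam nu th l. psg_run (region2 N K w a b Ps Pt) (subgrad_choice N K w a b (\<lambda>_ _. 0) Ps Pr Pt) lam nu th
                        \<and> g = th l)
      else
        (\<exists>lam nu th l. psg_run (region2 N K w a b Ps Pt) (subgrad_choice N K w a b c Ps Pr Pt) lam nu th
                        \<and> g = th l))"

definition gains_in :: "nat \<Rightarrow> nat \<Rightarrow> real \<Rightarrow> real \<Rightarrow> (nat \<Rightarrow> real) \<Rightarrow> (nat \<Rightarrow> nat \<Rightarrow> real)
    \<Rightarrow> (nat \<Rightarrow> nat \<Rightarrow> real) \<Rightarrow> bool" where
  "gains_in N K glo ghi a b c \<longleftrightarrow>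
     (\<forall>m<N. a m = 0 \<or> (glo \<le> a m \<and> a m \<le> ghi)) \<and>
     (\<forall>n<N. \<forall>k<K. b n k = 0 \<or> (glo \<le> b n k \<and> b n k \<le> ghi)) \<and>
     (\<forall>m<N. \<forall>k<K. c m k = 0 \<or> (glo \<le> c m k \<and> c m k \<le> ghi))"

end

theory Submission
  imports Defs "HOL-Real_Asymp.Real_Asymp"
begin

text \<open>
  Every candidate power pair is a water-filling level \<open>[w / (\<alpha> S) - 1/g]\<^sup>+\<close>, where the
  effective price \<open>S\<close> is \<open>\<lambda>\<^sub>s + \<lambda>\<^sub>t\<close> or, for the relay pair \<open>p\<^sub>1\<close>,
  \<open>\<lambda>\<^sub>s + \<lambda>\<^sub>t + (a - c)/b (\<lambda>\<^sub>r + \<lambda>\<^sub>t)\<close>. The regions \<open>\<R>\<^sub>1\<close>, \<open>\<R>\<^sub>2\<close> are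
  designed so that on them this price is at least a constant \<open>d > 0\<close> depending only on the
  weights, the power limits and the gain range \<open>[glo, ghi]\<close>; the projected iterates never leave
  the (closed) region. Hence every source power is at most \<open>1/(\<alpha> d)\<close>, every relay power at most
  \<open>ghi/glo\<close> times that, and since a subgradient sums one pair per source channel,
  \<open>\<parallel>\<theta>\<parallel> \<le> P\<^sub>s + P\<^sub>r + P\<^sub>t + 2N(1 + ghi/glo)/(\<alpha> d)\<close>, which is even linear in \<open>N\<close>.
\<close>

lemma alpha_pos: "alpha > 0"
  unfolding alpha_def by simp

lemma wlevel_nonneg: "0 \<le> wlevel x g"
  unfolding wlevel_def pplus_def by auto

lemma wlevel_le_max: "wlevel x g \<le> max x 0"
proof -
  have "x - 1 / g \<le> x" if "0 < g" using that by simp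
  then show ?thesis unfolding wlevel_def pplus_def by (auto intro: le_max_iff_disj[THEN iffD2])
qed

lemma wlevel_price_bound:
  assumes "0 \<le> x" "x \<le> 1" "0 < d" "d \<le> S"
  shows "wlevel (x / (alpha * S)) g \<le> 1 / (alpha * d)"
proof -
  have "x / (alpha * S) \<le> 1 / (alpha * S)"
    using assms alpha_pos by (simp add: divide_right_mono)
  also have "\<dots> \<le> 1 / (alpha * d)"
    using assms alpha_pos by (intro divide_left_mono mult_left_mono) auto
  finally show ?thesis
    using wlevel_le_max[of "x / (alpha * S)" g] assms alpha_pos by simp
qed

lemma p_adm_bounds:
  assumes w: "0 \<le> w k" "w k \<le> 1"
    and gains: "0 \<le> c m k" "0 < glo" "glo \<le> ghi" "0 < b n k \<Longrightarrow> glo \<le> b n k" "a m \<le> ghi"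
    and d: "0 < d" and R: "0 \<le> lam_r lam + lam_t lam"
    and S: "0 < a m \<Longrightarrow> a m \<le> c m k \<or> 0 < c m k \<Longrightarrow> d \<le> lam_s lam + lam_t lam"
    and SR: "c m k < a m \<Longrightarrow> 0 < b n k \<Longrightarrow>
      b n k * d \<le> b n k * (lam_s lam + lam_t lam) + (a m - c m k) * (lam_r lam + lam_t lam)"
    and p: "p_adm w a b c m n k lam p"
  shows "0 \<le> fst p \<and> fst p \<le> 1 / (alpha * d) \<and> 0 \<le> snd p \<and> snd p \<le> ghi / glo / (alpha * d)"
proof -
  let ?X = "1 / (alpha * d)" and ?S = "lam_s lam + lam_t lam"
  have X: "0 < ?X" using d alpha_pos by simp
  have direct_link: "0 \<le> fst q \<and> fst q \<le> ?X \<and> snd q = 0"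
    if q: "q = (wlevel (w k / (alpha * ?S)) g, 0)" and g: "0 < g \<Longrightarrow> d \<le> ?S" for q g
  proof (cases "0 < g")
    case True
    then show ?thesis using q wlevel_nonneg wlevel_price_bound[OF w d g[OF True]] by simp
  next
    case False
    then show ?thesis using q X unfolding wlevel_def by simp
  qed
  have P0: "0 \<le> fst (p0 w a m k lam) \<and> fst (p0 w a m k lam) \<le> ?X \<and> snd (p0 w a m k lam) = 0"
    if "a m \<le> c m k" using direct_link[of _ "a m"] S that unfolding p0_def by blast
  have P2: "0 \<le> fst (p2 w c m k lam) \<and> fst (p2 w c m k lam) \<le> ?X \<and> snd (p2 w c m k lam) = 0"
    if "c m k < a m" using direct_link[of _ "c m k"] S that unfolding p2_def by force
  have P1: "0 \<le> fst (p1 w a b c m n k lam) \<and> fst (p1 w a b c m n k lam) \<le> ?X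
      \<and> 0 \<le> snd (p1 w a b c m n k lam) \<and> snd (p1 w a b c m n k lam) \<le> ghi / glo * ?X"
    if ac: "c m k < a m" and bp: "0 < b n k"
  proof -
    define D where "D = b n k * ?S + (a m - c m k) * (lam_r lam + lam_t lam)"
    define t where "t = wlevel (w k * b n k / (alpha * D)) (a m)"
    have "w k * b n k / (alpha * D) = w k / (alpha * (D / b n k))"
      using bp by simp
    moreover have "d \<le> D / b n k"
      using SR[OF ac bp] bp unfolding D_def by (simp add: field_simps)
    ultimately have t: "0 \<le> t" "t \<le> ?X"
      unfolding t_def using wlevel_nonneg wlevel_price_bound[OF w d] by metis+
    have "(a m - c m k) / b n k \<le> ghi / b n k"
      using gains bp by (intro divide_right_mono) auto
    also have "\<dots> \<le> ghi / glo"
      using gains bp ac by (intro divide_left_mono) auto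
    finally have slope: "0 \<le> (a m - c m k) / b n k" "(a m - c m k) / b n k \<le> ghi / glo"
      using ac bp by auto
    have "(a m - c m k) / b n k * t \<le> ghi / glo * ?X"
      using slope t by (intro mult_mono) auto
    moreover have "0 \<le> (a m - c m k) / b n k * t"
      using slope(1) t(1) by (rule mult_nonneg_nonneg)
    ultimately show ?thesis using t
      unfolding p1_def Let_def t_def[symmetric] D_def[symmetric] by simp
  qed
  have "ghi / glo * ?X = ghi / glo / (alpha * d)" by simp
  moreover have "0 \<le> ghi / glo * ?X"
    using X gains by simp
  ultimately show ?thesis
    using p P0 P1 P2 X unfolding p_adm_def by (auto split: if_splits)
qed

lemma norm_power_residual_le:
  fixes A B Ps Pr Pt :: real
  assumes "0 \<le> A" "A \<le> x" "0 \<le> B" "B \<le> y" "0 \<le> Ps" "0 \<le> Pr" "0 \<le> Pt"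
  shows "norm (Ps - A, Pr - B, Pt - (A + B)) \<le> Ps + Pr + Pt + 2 * (x + y)"
proof -
  have "norm (Ps - A, Pr - B, Pt - (A + B)) \<le> norm (Ps - A) + norm (Pr - B, Pt - (A + B))"
    by (rule norm_Pair_le)
  also have "\<dots> \<le> \<bar>Ps - A\<bar> + (\<bar>Pr - B\<bar> + \<bar>Pt - (A + B)\<bar>)"
    using norm_Pair_le[of "Pr - B" "Pt - (A + B)"] by simp
  also have "\<dots> \<le> (Ps + A) + ((Pr + B) + (Pt + (A + B)))"
  proof (intro add_mono)
    show "\<bar>Ps - A\<bar> \<le> Ps + A" "\<bar>Pr - B\<bar> \<le> Pr + B" "\<bar>Pt - (A + B)\<bar> \<le> Pt + (A + B)"
      using assms by linarith+
  qed
  also have "\<dots> \<le> Ps + Pr + Pt + 2 * (x + y)"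
    using assms by (simp add: algebra_simps)
  finally show ?thesis .
qed

lemma subgrad_choice_obtains_powers:
  assumes "subgrad_choice N K w a b c Ps Pr Pt lam th"
  obtains q where "\<forall>m<N. \<exists>n<N. \<exists>k<K. p_adm w a b c m n k lam (q m)"
    and "th = (Ps - (\<Sum>m<N. fst (q m)), Pr - (\<Sum>m<N. snd (q m)),
               Pt - ((\<Sum>m<N. fst (q m)) + (\<Sum>m<N. snd (q m))))"
proof -
  obtain ks \<sigma> p where
      adm: "\<forall>m<N. \<forall>n<N. \<forall>k<K. p_adm w a b c m n k lam (p m n k)"
    and ks: "\<forall>m<N. \<forall>n<N. ks m n < K"
    and \<sigma>: "\<sigma> permutes {..<N}"
    and th: "th = (Ps - (\<Sum>m<N. fst (p m (\<sigma> m) (ks m (\<sigma> m)))),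
              Pr - (\<Sum>m<N. snd (p m (\<sigma> m) (ks m (\<sigma> m)))),
              Pt - (\<Sum>m<N. fst (p m (\<sigma> m) (ks m (\<sigma> m))) + snd (p m (\<sigma> m) (ks m (\<sigma> m)))))"
    using assms unfolding subgrad_choice_def by blast
  have "\<exists>n<N. \<exists>k<K. p_adm w a b c m n k lam (p m (\<sigma> m) (ks m (\<sigma> m)))" if "m < N" for m
  proof (intro exI conjI)
    show "\<sigma> m < N"
      using \<sigma> that permutes_in_image by fastforce
    then show "ks m (\<sigma> m) < K" "p_adm w a b c m (\<sigma> m) (ks m (\<sigma> m)) lam (p m (\<sigma> m) (ks m (\<sigma> m)))"
      using adm ks that by auto
  qed
  moreover have "th = (Ps - (\<Sum>m<N. fst (p m (\<sigma> m) (ks m (\<sigma> m)))), Pr - (\<Sum>m<N. snd (p m (\<sigma> m) (ks m (\<sigma> m)))),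
      Pt - ((\<Sum>m<N. fst (p m (\<sigma> m) (ks m (\<sigma> m)))) + (\<Sum>m<N. snd (p m (\<sigma> m) (ks m (\<sigma> m))))))"
    unfolding th sum.distrib ..
  ultimately show ?thesis
    by (rule that[rule_format])
qed

lemma subgrad_choice_norm_le:
  assumes "subgrad_choice N K w a b c Ps Pr Pt lam th"
    and "0 \<le> Ps" "0 \<le> Pr" "0 \<le> Pt"
    and bounds: "\<And>m n k p. m < N \<Longrightarrow> n < N \<Longrightarrow> k < K \<Longrightarrow> p_adm w a b c m n k lam p \<Longrightarrow>
                   0 \<le> fst p \<and> fst p \<le> X \<and> 0 \<le> snd p \<and> snd p \<le> Y"
  shows "norm th \<le> Ps + Pr + Pt + 2 * real N * (X + Y)"
proof -
  obtain q where adm: "\<forall>m<N. \<exists>n<N. \<exists>k<K. p_adm w a b c m n k lam (q m)"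
    and th: "th = (Ps - (\<Sum>m<N. fst (q m)), Pr - (\<Sum>m<N. snd (q m)),
                   Pt - ((\<Sum>m<N. fst (q m)) + (\<Sum>m<N. snd (q m))))"
    using subgrad_choice_obtains_powers[OF assms(1)] by blast
  have q: "0 \<le> fst (q m) \<and> fst (q m) \<le> X \<and> 0 \<le> snd (q m) \<and> snd (q m) \<le> Y" if "m < N" for m
    using adm bounds that by blast
  have "(\<Sum>m<N. fst (q m)) \<le> real N * X" "(\<Sum>m<N. snd (q m)) \<le> real N * Y"
    using sum_mono[of "{..<N}" "\<lambda>m. fst (q m)" "\<lambda>_. X"] sum_mono[of "{..<N}" "\<lambda>m. snd (q m)" "\<lambda>_. Y"] q
    by auto
  moreover have "0 \<le> (\<Sum>m<N. fst (q m))" "0 \<le> (\<Sum>m<N. snd (q m))"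
    using q by (auto intro: sum_nonneg)
  ultimately have "norm th \<le> Ps + Pr + Pt + 2 * (real N * X + real N * Y)"
    unfolding th using assms(2-4) by (intro norm_power_residual_le) auto
  then show ?thesis
    by (simp add: algebra_simps)
qed

text \<open>
  The three clauses bound from below the effective prices in the denominators of
  \<open>p0\<close>, \<open>p2\<close> and \<open>p1\<close>; the last is multiplied through by \<open>b\<close> to avoid a division.
\<close>

definition price_floor :: "nat \<Rightarrow> nat \<Rightarrow> (nat \<Rightarrow> real) \<Rightarrow> (nat \<Rightarrow> nat \<Rightarrow> real)
    \<Rightarrow> (nat \<Rightarrow> nat \<Rightarrow> real) \<Rightarrow> real \<Rightarrow> dual \<Rightarrow> bool" where
  "price_floor N K a b c d lam \<longleftrightarrow> 0 \<le> lam_r lam + lam_t lam \<and>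
     (\<forall>m<N. \<forall>k<K. 0 < a m \<and> (a m \<le> c m k \<or> 0 < c m k) \<longrightarrow> d \<le> lam_s lam + lam_t lam) \<and>
     (\<forall>m<N. \<forall>n<N. \<forall>k<K. c m k < a m \<and> 0 < b n k \<longrightarrow>
        b n k * d \<le> b n k * (lam_s lam + lam_t lam) + (a m - c m k) * (lam_r lam + lam_t lam))"

lemma price_floor_mono:
  assumes "price_floor N K a b c d lam" "d' \<le> d"
  shows "price_floor N K a b c d' lam"
proof -
  have "b n k * d' \<le> b n k * d" if "0 < b n k" for n k
    using assms(2) that by simp
  then show ?thesis
    using assms unfolding price_floor_def by (meson order_trans)
qed

lemma weight_le_one:
  fixes w :: "nat \<Rightarrow> real"
  assumes "\<forall>k<K. 0 \<le> w k" "(\<Sum>k<K. w k) = 1" "k < K"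
  shows "w k \<le> 1"
  using member_le_sum[of k "{..<K}" w] assms by auto

lemma subgrad_choice_norm_le_price_floor:
  assumes sg: "subgrad_choice N K w a b c Ps Pr Pt lam th"
    and w: "\<forall>k<K. 0 \<le> w k" "(\<Sum>k<K. w k) = 1"
    and P: "0 \<le> Ps" "0 \<le> Pr" "0 \<le> Pt"
    and gains: "gains_in N K glo ghi a b c" "0 < glo" "glo \<le> ghi"
    and floor: "price_floor N K a b c d lam" "0 < d"
  shows "norm th \<le> Ps + Pr + Pt + 2 * real N * ((1 + ghi / glo) / (alpha * d))"
proof -
  have "norm th \<le> Ps + Pr + Pt + 2 * real N * (1 / (alpha * d) + ghi / glo / (alpha * d))"
  proof (rule subgrad_choice_norm_le[OF sg P])
    fix m n k p
    assume mnk: "m < N" "n < N" "k < K" and p: "p_adm w a b c m n k lam p"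
    show "0 \<le> fst p \<and> fst p \<le> 1 / (alpha * d) \<and> 0 \<le> snd p \<and> snd p \<le> ghi / glo / (alpha * d)"
    proof (rule p_adm_bounds[OF _ _ _ gains(2,3) _ _ floor(2) _ _ _ p])
      show "0 \<le> w k" "w k \<le> 1"
        using w weight_le_one mnk by auto
      show "0 \<le> c m k" "0 < b n k \<Longrightarrow> glo \<le> b n k" "a m \<le> ghi"
        using gains mnk unfolding gains_in_def by force+
    qed (use floor mnk in \<open>auto simp: price_floor_def\<close>)
  qed
  then show ?thesis
    by (simp add: add_divide_distrib)
qed

lemma glo_le_Min_pos_gain:
  assumes "gains_in N K glo ghi a b c" "m < N" "0 < a m"
  shows "glo \<le> Min {a m |m. m < N \<and> 0 < a m}"
  using assms unfolding gains_in_def by (intro Min.boundedI) force+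

lemma region1_price_floor:
  assumes w: "0 \<le> wmin K w" and P: "0 \<le> Ps" "0 \<le> Pt"
    and gains: "gains_in N K glo ghi a b c" "0 < glo" "glo \<le> ghi"
    and c: "\<exists>m<N. \<exists>k<K. 0 < c m k" and lam: "lam \<in> region1 N K w a c Ps Pt"
  shows "price_floor N K a b c (wmin K w * glo / (4 * alpha * (ghi * min Ps Pt + 1))) lam"
proof -
  define minA where "minA = Min {a m |m. m < N \<and> 0 < a m}"
  define minC where "minC = Min {c m k |m k. m < N \<and> k < K \<and> 0 < c m k}"
  define maxA where "maxA = Max {a m |m. m < N}"
  let ?S = "lam_s lam + lam_t lam" and ?R = "lam_r lam + lam_t lam"
  have R: "0 \<le> ?R" using lam unfolding region1_def nonneg_dual_def by simp
  have S: "wmin K w * glo / (4 * alpha * (ghi * min Ps Pt + 1)) \<le> ?S"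
    if m: "m < N" "0 < a m" for m
  proof -
    have mA: "glo \<le> minA"
      unfolding minA_def using glo_le_Min_pos_gain[OF gains(1) m] .
    have "finite {c m k |m k. m < N \<and> k < K}"
      by (rule finite_image_set2) auto
    then have "finite {c m k |m k. m < N \<and> k < K \<and> 0 < c m k}"
      by (rule finite_subset[rotated]) blast
    then have mC: "glo \<le> minC"
      unfolding minC_def using c gains unfolding gains_in_def
      by (intro Min.boundedI) force+
    have "a m \<le> maxA"
      unfolding maxA_def using m by (intro Max_ge) auto
    moreover have "maxA \<le> ghi"
      unfolding maxA_def using m gains unfolding gains_in_def by (intro Max.boundedI) force+
    ultimately have MA: "0 \<le> maxA" "maxA \<le> ghi"
      using m by auto
    have "wmin K w * glo / (4 * alpha * (ghi * min Ps Pt + 1))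
        \<le> wmin K w * min minA minC / (4 * alpha * (maxA * min Ps Pt + 1))"
    proof (rule frac_le)
      show "0 \<le> wmin K w * min minA minC" "wmin K w * glo \<le> wmin K w * min minA minC"
        using w mA mC gains by (auto intro: mult_left_mono)
      show "0 < 4 * alpha * (maxA * min Ps Pt + 1)"
        using alpha_pos MA P by (simp add: add_nonneg_pos)
      show "4 * alpha * (maxA * min Ps Pt + 1) \<le> 4 * alpha * (ghi * min Ps Pt + 1)"
        using alpha_pos MA P by (simp add: mult_right_mono)
    qed
    also have "\<dots> \<le> ?S"
      using lam unfolding region1_def minA_def minC_def maxA_def by simp
    finally show ?thesis .
  qed
  have "b n k * d \<le> b n k * ?S + (a m - c m k) * ?R"
    if "m < N" "k < K" "c m k < a m" "0 < b n k" "d \<le> ?S" for m n k d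
    using that R by (smt (verit) mult_left_mono mult_nonneg_nonneg)
  moreover have "0 < a m" if "m < N" "k < K" "c m k < a m" for m k
    using gains that unfolding gains_in_def by force
  ultimately show ?thesis
    unfolding price_floor_def using R S by (meson less_le_trans)
qed

lemma region2_price_floor:
  assumes w: "0 \<le> wmin K w" and P: "0 \<le> Ps" "0 \<le> Pt"
    and gains: "gains_in N K glo ghi a b c" "0 < glo" "glo \<le> ghi"
    and c: "\<forall>m<N. \<forall>k<K. c m k = 0" and lam: "lam \<in> region2 N K w a b Ps Pt"
  shows "price_floor N K a b c (wmin K w / (alpha * (min Ps Pt + 1 / glo))) lam"
proof -
  define minA where "minA = Min {a m |m. m < N \<and> 0 < a m}"
  define maxB where "maxB = Max {b n k |n k. n < N \<and> k < K}"
  define d where "d = wmin K w / (alpha * (min Ps Pt + 1 / glo))"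
  let ?S = "lam_s lam + lam_t lam" and ?R = "lam_r lam + lam_t lam"
  have R: "0 \<le> ?R" using lam unfolding region2_def nonneg_dual_def by simp
  have "b n k * d \<le> b n k * ?S + a m * ?R"
    if mnk: "m < N" "n < N" "k < K" "0 < a m" "0 < b n k" for m n k
  proof -
    have mA: "glo \<le> minA" "minA \<le> a m"
      unfolding minA_def using glo_le_Min_pos_gain[OF gains(1)] mnk by (auto intro: Min_le)
    have bM: "b n k \<le> maxB"
      unfolding maxB_def by (rule Max_ge) (use mnk in \<open>auto intro: finite_image_set2\<close>)
    have "b n k * (minA / maxB) = minA * (b n k / maxB)"
      by simp
    also have "\<dots> \<le> minA"
      using bM mnk mA gains by (intro mult_left_le) (auto simp: divide_le_eq_1)
    also have "\<dots> \<le> a m"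
      using mA by simp
    finally have coeff: "b n k * (minA / maxB) \<le> a m" .
    have "d \<le> wmin K w / (alpha * (min Ps Pt + 1 / minA))"
      unfolding d_def using alpha_pos mA gains P w
      by (intro divide_left_mono mult_left_mono add_left_mono divide_left_mono mult_pos_pos add_nonneg_pos) auto
    also have "\<dots> \<le> ?S + minA / maxB * ?R"
      using lam unfolding region2_def minA_def maxB_def by simp
    finally have "b n k * d \<le> b n k * (?S + minA / maxB * ?R)"
      using mnk by (intro mult_left_mono) auto
    also have "\<dots> = b n k * ?S + b n k * (minA / maxB) * ?R"
      by (simp only: distrib_left mult.assoc)
    also have "\<dots> \<le> b n k * ?S + a m * ?R"
      using coeff R by (intro add_left_mono mult_right_mono)
    finally show ?thesis .
  qed
  then show ?thesis
    unfolding price_floor_def d_def[symmetric] using R c by auto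
qed

lemma closed_region1: "closed (region1 N K w a c Ps Pt)"
  unfolding region1_def nonneg_dual_def lam_s_def lam_r_def lam_t_def
  by (intro closed_Collect_conj closed_Collect_le continuous_intros)

lemma closed_region2: "closed (region2 N K w a b Ps Pt)"
  unfolding region2_def nonneg_dual_def lam_s_def lam_r_def lam_t_def
  by (intro closed_Collect_conj closed_Collect_le continuous_intros)

lemma psg_run_iterate:
  assumes run: "psg_run Reg sg lam nu th" and "closed Reg"
  shows "lam l \<in> Reg \<and> sg (lam l) (th l)"
proof -
  have "lam l \<in> Reg"
  proof (induction l)
    case 0
    then show ?case using run unfolding psg_run_def by simp
  next
    case (Suc l)
    then show ?case
      using run \<open>closed Reg\<close> closest_point_in_set unfolding psg_run_def by (metis empty_iff)
  qed
  then show ?thesis using run unfolding psg_run_def by simp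
qed

lemma psg_run_subgrad_norm_le:
  assumes run: "psg_run Reg (subgrad_choice N K w a b c Ps Pr Pt) lam nu th" "closed Reg"
    and floor: "\<And>lam. lam \<in> Reg \<Longrightarrow> price_floor N K a b c d lam" "0 < d"
    and w: "\<forall>k<K. 0 \<le> w k" "(\<Sum>k<K. w k) = 1"
    and P: "0 \<le> Ps" "0 \<le> Pr" "0 \<le> Pt"
    and gains: "gains_in N K glo ghi a b c" "0 < glo" "glo \<le> ghi"
  shows "norm (th l) \<le> Ps + Pr + Pt + 2 * real N * ((1 + ghi / glo) / (alpha * d))"
proof -
  have "lam l \<in> Reg" "subgrad_choice N K w a b c Ps Pr Pt (lam l) (th l)"
    using psg_run_iterate[OF run] by auto
  then show ?thesis
    using subgrad_choice_norm_le_price_floor[OF _ w P gains floor(1) floor(2)] by blast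
qed

lemma wmin_pos:
  assumes "\<forall>k<K. 0 \<le> w k" "(\<Sum>k<K. w k) = 1"
  shows "0 < wmin K w"
proof -
  obtain k where k: "k < K" "0 < w k"
    using assms by (metis less_eq_real_def lessThan_iff sum.neutral zero_neq_one)
  then have "Min {w k |k. k < K \<and> 0 < w k} \<in> {w k |k. k < K \<and> 0 < w k}"
    by (intro Min_in) auto
  then show ?thesis
    unfolding wmin_def by auto
qed

definition dcdm_price_floor :: "nat \<Rightarrow> (nat \<Rightarrow> real) \<Rightarrow> real \<Rightarrow> real \<Rightarrow> real \<Rightarrow> real \<Rightarrow> real" where
  "dcdm_price_floor K w Ps Pt glo ghi =
     min (wmin K w * glo / (4 * alpha * (ghi * min Ps Pt + 1)))
         (wmin K w / (alpha * (min Ps Pt + 1 / glo)))"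

lemma dcdm_price_floor_pos:
  assumes "0 < wmin K w" "0 \<le> Ps" "0 \<le> Pt" "0 < glo" "glo \<le> ghi"
  shows "0 < dcdm_price_floor K w Ps Pt glo ghi"
  unfolding dcdm_price_floor_def using assms alpha_pos
  by (auto intro!: divide_pos_pos mult_pos_pos add_nonneg_pos)

lemma dcdm_step_subgradient_norm_le:
  assumes w: "\<forall>k<K. 0 \<le> w k" "(\<Sum>k<K. w k) = 1"
    and P: "0 \<le> Ps" "0 \<le> Pr" "0 \<le> Pt"
    and gains: "gains_in N K glo ghi a b c" "0 < glo" "glo \<le> ghi"
    and step: "dcdm_step_subgradient N K w a b c Ps Pr Pt g"
  shows "norm g \<le> Ps + Pr + Pt
           + 2 * real N * ((1 + ghi / glo) / (alpha * dcdm_price_floor K w Ps Pt glo ghi))"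
proof -
  let ?d = "dcdm_price_floor K w Ps Pt glo ghi"
  have wmin: "0 \<le> wmin K w" and d: "0 < ?d"
    using wmin_pos[OF w] dcdm_price_floor_pos P gains by auto
  have floor2: "price_floor N K a b c' ?d lam"
    if "gains_in N K glo ghi a b c'" "\<forall>m<N. \<forall>k<K. c' m k = 0" "lam \<in> region2 N K w a b Ps Pt"
    for c' lam
    using region2_price_floor[OF wmin P(1,3) that(1) gains(2,3) that(2,3)]
    unfolding dcdm_price_floor_def by (rule price_floor_mono) simp
  show ?thesis
  proof (cases "\<exists>m<N. \<exists>k<K. 0 < c m k")
    case True
    have floor1: "price_floor N K a b c ?d lam" if "lam \<in> region1 N K w a c Ps Pt" for lam
      using region1_price_floor[OF wmin P(1,3) gains True that]
      unfolding dcdm_price_floor_def by (rule price_floor_mono) simp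
    have gains0: "gains_in N K glo ghi a b (\<lambda>_ _. 0)"
      using gains(1) unfolding gains_in_def by simp
    from step True consider
        (region1) lam nu th l where "psg_run (region1 N K w a c Ps Pt) (subgrad_choice N K w a b c Ps Pr Pt) lam nu th" "g = th l"
      | (region2) lam nu th l where "psg_run (region2 N K w a b Ps Pt) (subgrad_choice N K w a b (\<lambda>_ _. 0) Ps Pr Pt) lam nu th" "g = th l"
      unfolding dcdm_step_subgradient_def by auto
    then show ?thesis
    proof cases
      case region1
      then show ?thesis
        using psg_run_subgrad_norm_le[OF region1(1) closed_region1 floor1 d w P gains] by simp
    next
      case region2
      then show ?thesis
        using psg_run_subgrad_norm_le[OF region2(1) closed_region2 floor2[OF gains0] d w P gains0 gains(2,3)]
        by simp
    qed
  next
    case False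
    then have "\<forall>m<N. \<forall>k<K. c m k = 0"
      using gains unfolding gains_in_def by force
    moreover obtain lam nu th l where
      "psg_run (region2 N K w a b Ps Pt) (subgrad_choice N K w a b c Ps Pr Pt) lam nu th" "g = th l"
      using step False unfolding dcdm_step_subgradient_def by auto
    ultimately show ?thesis
      using psg_run_subgrad_norm_le[OF _ closed_region2 floor2[OF gains(1)] d w P gains] by simp
  qed
qed

theorem lemma4:
  fixes K :: nat and w :: "nat \<Rightarrow> real" and Ps Pr Pt glo ghi :: real
  assumes "K \<ge> 1" and "\<forall>k<K. w k \<ge> 0" and "(\<Sum>k<K. w k) = 1"
    and "Ps > 0" and "Pr > 0" and "Pt > 0"
    and "0 < glo" and "glo \<le> ghi"
  shows "\<exists>\<theta>max :: nat \<Rightarrow> real. \<theta>max \<in> O(\<lambda>N. (real N) ^ 2) \<and>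
           (\<forall>N a b c g. N \<ge> 1 \<and> gains_in N K glo ghi a b c \<and>
              dcdm_step_subgradient N K w a b c Ps Pr Pt g \<longrightarrow> norm g \<le> \<theta>max N)"
proof -
  define C where "C = 2 * ((1 + ghi / glo) / (alpha * dcdm_price_floor K w Ps Pt glo ghi))"
  have "(\<lambda>N. Ps + Pr + Pt + C * real N) \<in> O(\<lambda>N. (real N) ^ 2)"
    by real_asymp
  moreover have "norm g \<le> Ps + Pr + Pt + C * real N"
    if "gains_in N K glo ghi a b c" "dcdm_step_subgradient N K w a b c Ps Pr Pt g" for N a b c g
    using dcdm_step_subgradient_norm_le[OF assms(2,3) _ _ _ that(1) assms(7,8) that(2)] assms(4-6)
    unfolding C_def by (simp add: algebra_simps)
  ultimately show ?thesis
    by blast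
qed

end
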